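(* Let $\mathcal M=\{M_{I,\bar J}\}$ be an $(n,d)$-matching ensemble and let $\{T_v\}$ be an extended $(n,d)$-tope arrangement such that every tope $T_v$ is compatible with every partial matching $M_{I,\bar J}$. For a lattice point $w$ of $(n+1)\Delta^{d-1}$, let $\overline{\mathrm{supp}}(w)=\{\bar j\in[\bar d]: w_{\bar j}\ge1\}$. Then $\bar{\mathbb T}(w):=\bigcup_{\bar j\in\overline{\mathrm{supp}}(w)}T_{w-e_{\bar j}}$ is a spanning tree on $[n]\sqcup\overline{\mathrm{supp}}(w)$ in which every vertex of $[n]$ has degree $1$ or $2$. Moreover, letting $\Omega(w)=\bigcap_{\bar j\in\overline{\mathrm{supp}}(w)}T_{w-e_{\bar j}}$, for each $\bar j\in\overline{\mathrm{supp}}(w)$ we have $T_{w-e_{\bar j}}=\Omega(w)\sqcup\bar{\mathbb T}(w)^{\leftarrow\bar j}$, where $\bar{\mathbb T}(w)^{\leftarrow\bar j}$ is the set of edges $(i,\bar k)$ of $\bar{\mathbb T}(w)$ such that, rooting the tree at $\bar j$, $i$ is the parent of $\bar k$.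
   Context: Fix positive integers $n,d$; graphs are subgraphs of the complete bipartite graph with left vertices $[n]$ and right vertices $[\bar d]=\{\bar1,\dots,\bar d\}$, identified with edge sets. $RD$ is the vector of right-vertex degrees; $e_{\bar j}$ a unit vector; lattice points of $k\Delta^{d-1}$ are vectors in $\mathbb Z_{\ge0}^{[\bar d]}$ with sum $k$. Two acyclic graphs are compatible if whenever both contain a perfect matching between the same $I\subseteq[n]$, $\bar J\subseteq[\bar d]$, these matchings coincide. A tope is a map $T:[n]\to[\bar d]$ (graph $\{(i,T(i))\}$). An extended $(n,d)$-tope arrangement is a collection of pairwise compatible topes $T_v$, one for each lattice point $v$ of $n\Delta^{d-1}$, with $RD(T_v)=v$. (For every matching ensemble an extended tope arrangement compatible with all its partial matchings exists; it is the one obtained by iterated amalgamation.) An $(n,d)$-matching ensemble is a collection of bijections $M_{I,\bar J}:I\to\bar J$ (viewed as matching graphs), one for each $I\subseteq[n]$, $\bar J\subseteq[\bar d]$ with $|I|=|\bar J|$, such that (Closure) if $I'\subseteq I$, $\bar J'\subseteq\bar J$ and $M_{I,\bar J}$ contains a perfect matching between $I'$ and $\bar J'$ then $M_{I',\bar J'}\subseteq M_{I,\bar J}$; (Left linkage) if $|I|=|\bar J|+1$, the union of $M_{I',\bar J}$ over $I'\subset I$ with $|I'|=|\bar J|$ is a spanning tree on $I\sqcup\bar J$ in which each vertex of $\bar J$ has degree 2; (Right linkage) if $|I|+1=|\bar J|$, the union of $M_{I,\bar J'}$ over $\bar J'\subset\bar J$ with $|\bar J'|=|I|$ is a spanning tree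 on $I\sqcup\bar J$ in which each vertex of $I$ has degree 2. *)

theory Defs
  imports Main
begin

text \<open>Graphs are subsets of the complete bipartite graph with left vertices [n] = {1..n}
and right vertices [d] = {1..d}; an edge (i, j) joins the left vertex i to the right
vertex j. As vertices of the (undirected) graph we use Inl i (left) and Inr j (right).\<close>

type_synonym bgraph = "(nat \<times> nat) set"
type_synonym vert = "nat + nat"

definition adj :: "bgraph \<Rightarrow> vert \<Rightarrow> vert \<Rightarrow> bool" where
  "adj G u v \<longleftrightarrow> (\<exists>i j. (i, j) \<in> G \<and>
      ((u = Inl i \<and> v = Inr j) \<or> (u = Inr j \<and> v = Inl i)))"

definition is_path :: "bgraph \<Rightarrow> vert list \<Rightarrow> bool" where
  "is_path G p \<longleftrightarrow> p \<noteq> [] \<and> distinct p \<and>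
      (\<forall>k. Suc k < length p \<longrightarrow> adj G (p ! k) (p ! Suc k))"

definition acyclic_graph :: "bgraph \<Rightarrow> bool" where
  "acyclic_graph G \<longleftrightarrow> \<not> (\<exists>p. is_path G p \<and> 3 \<le> length p \<and> adj G (last p) (hd p))"

definition connected_on :: "bgraph \<Rightarrow> vert set \<Rightarrow> bool" where
  "connected_on G V \<longleftrightarrow> (\<forall>u\<in>V. \<forall>v\<in>V. \<exists>p. is_path G p \<and> hd p = u \<and> last p = v \<and> set p \<subseteq> V)"

definition spanning_tree :: "bgraph \<Rightarrow> vert set \<Rightarrow> bool" where
  "spanning_tree G V \<longleftrightarrow> (\<forall>(i, j)\<in>G. Inl i \<in> V \<and> Inr j \<in> V) \<and>
      connected_on G V \<and> acyclic_graph G"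

definition left_deg :: "bgraph \<Rightarrow> nat \<Rightarrow> nat" where
  "left_deg G i = card {j. (i, j) \<in> G}"

definition right_deg :: "bgraph \<Rightarrow> nat \<Rightarrow> nat" where
  "right_deg G j = card {i. (i, j) \<in> G}"

definition perfect_matching :: "bgraph \<Rightarrow> nat set \<Rightarrow> nat set \<Rightarrow> bool" where
  "perfect_matching M I J \<longleftrightarrow> M \<subseteq> I \<times> J \<and>
      (\<forall>i\<in>I. \<exists>!j. (i, j) \<in> M) \<and> (\<forall>j\<in>J. \<exists>!i. (i, j) \<in> M)"

definition contains_pm :: "bgraph \<Rightarrow> nat set \<Rightarrow> nat set \<Rightarrow> bool" where
  "contains_pm G I J \<longleftrightarrow> (\<exists>M. M \<subseteq> G \<and> perfect_matching M I J)"

definition compatible :: "bgraph \<Rightarrow> bgraph \<Rightarrow> bool" where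
  "compatible G1 G2 \<longleftrightarrow> (\<forall>I J M1 M2. M1 \<subseteq> G1 \<and> M2 \<subseteq> G2 \<and>
      perfect_matching M1 I J \<and> perfect_matching M2 I J \<longrightarrow> M1 = M2)"

definition matching_ensemble ::
    "nat \<Rightarrow> nat \<Rightarrow> (nat set \<Rightarrow> nat set \<Rightarrow> bgraph) \<Rightarrow> bool" where
  "matching_ensemble n d M \<longleftrightarrow>
     (\<forall>I J. I \<subseteq> {1..n} \<and> J \<subseteq> {1..d} \<and> card I = card J \<longrightarrow>
        perfect_matching (M I J) I J) \<and>
     (\<forall>I J I' J'. I \<subseteq> {1..n} \<and> J \<subseteq> {1..d} \<and> card I = card J \<and>
        I' \<subseteq> I \<and> J' \<subseteq> J \<and> contains_pm (M I J) I' J' \<longrightarrow> M I' J' \<subseteq> M I J) \<and>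
     (\<forall>I J. I \<subseteq> {1..n} \<and> J \<subseteq> {1..d} \<and> card I = card J + 1 \<longrightarrow>
        (let U = \<Union>{M I' J | I'. I' \<subseteq> I \<and> card I' = card J} in
          spanning_tree U (Inl ` I \<union> Inr ` J) \<and> (\<forall>j\<in>J. right_deg U j = 2))) \<and>
     (\<forall>I J. I \<subseteq> {1..n} \<and> J \<subseteq> {1..d} \<and> card I + 1 = card J \<longrightarrow>
        (let U = \<Union>{M I J' | J'. J' \<subseteq> J \<and> card J' = card I} in
          spanning_tree U (Inl ` I \<union> Inr ` J) \<and> (\<forall>i\<in>I. left_deg U i = 2)))"

text \<open>Topes (graphs of maps [n] \<rightarrow> [d]), right degree vectors, lattice points of k\<Delta>^{d-1}.\<close>
definition is_tope :: "nat \<Rightarrow> nat \<Rightarrow> bgraph \<Rightarrow> bool" where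
  "is_tope n d G \<longleftrightarrow> G \<subseteq> {1..n} \<times> {1..d} \<and> (\<forall>i\<in>{1..n}. \<exists>!j. (i, j) \<in> G)"

definition RD :: "bgraph \<Rightarrow> nat \<Rightarrow> nat" where
  "RD G = (\<lambda>j. card {i. (i, j) \<in> G})"

definition lattice_point :: "nat \<Rightarrow> nat \<Rightarrow> (nat \<Rightarrow> nat) \<Rightarrow> bool" where
  "lattice_point d k v \<longleftrightarrow> (\<forall>j. j \<notin> {1..d} \<longrightarrow> v j = 0) \<and> (\<Sum>j\<in>{1..d}. v j) = k"

definition extended_tope_arrangement :: "nat \<Rightarrow> nat \<Rightarrow> ((nat \<Rightarrow> nat) \<Rightarrow> bgraph) \<Rightarrow> bool" where
  "extended_tope_arrangement n d T \<longleftrightarrow>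
     (\<forall>v. lattice_point d n v \<longrightarrow> is_tope n d (T v) \<and> RD (T v) = v) \<and>
     (\<forall>v v'. lattice_point d n v \<and> lattice_point d n v' \<longrightarrow> compatible (T v) (T v'))"

definition minus_unit :: "(nat \<Rightarrow> nat) \<Rightarrow> nat \<Rightarrow> (nat \<Rightarrow> nat)" where
  "minus_unit w j = w(j := w j - 1)"

definition supp_bar :: "nat \<Rightarrow> (nat \<Rightarrow> nat) \<Rightarrow> nat set" where
  "supp_bar d w = {j\<in>{1..d}. 1 \<le> w j}"

definition tree_parent :: "bgraph \<Rightarrow> vert \<Rightarrow> nat \<Rightarrow> nat \<Rightarrow> bool" where
  "tree_parent G r i k \<longleftrightarrow> (i, k) \<in> G \<and>
     (\<exists>p. is_path G p \<and> hd p = r \<and> last p = Inr k \<and> 2 \<le> length p \<and>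
          p ! (length p - 2) = Inl i)"

definition parent_edges :: "bgraph \<Rightarrow> nat \<Rightarrow> bgraph" where
  "parent_edges G j = {(i, k) \<in> G. tree_parent G (Inr j) i k}"

end

theory Submission
  imports Defs
begin

text \<open>Write \<open>T\<^sub>j\<close> for \<open>T\<^bsub>w - e\<^sub>j\<^esub>\<close>. Since \<open>RD(T\<^sub>j) = w - e\<^sub>j\<close>, away from the right
vertex \<open>l\<close> no column of \<open>T\<^sub>k\<close> is longer than the corresponding column of \<open>T\<^sub>l\<close>. For
compatible topes this forces every edge \<open>(i, l)\<close> of \<open>T\<^sub>l\<close> into \<open>T\<^sub>k\<close>: otherwise the left
vertices on which the two topes differ carry two different perfect matchings between the same
vertex sets. Call \<open>i\<close> pendant if \<open>(i, l) \<in> T\<^sub>l\<close> for some \<open>l\<close>; then all \<open>T\<^sub>k\<close> send it to the same \<open>l\<close>, and these edges form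
\<open>\<Omega>(w)\<close>. On the remaining left vertices \<open>I\<close>, each \<open>T\<^sub>j\<close> is a perfect matching onto
\<open>supp(w) - {j}\<close>, hence equals \<open>M\<^bsub>I, supp(w) - {j}\<^esub>\<close> by compatibility, so right linkage makes
their union a spanning tree on \<open>I \<squnion> supp(w)\<close> in which every vertex of \<open>I\<close> has degree 2.
Attaching the pendant vertices as leaves keeps it a tree, and rooted at \<open>j\<close>, the parent edges
of such a tree are exactly the perfect matching from \<open>I\<close> to the other right vertices.\<close>

section \<open>Paths in bipartite graphs\<close>

lemma adj_sym: "adj G u v \<longleftrightarrow> adj G v u"
  unfolding adj_def by blast

lemma adj_Inl: "adj G (Inl i) v \<longleftrightarrow> (\<exists>r. v = Inr r \<and> (i, r) \<in> G)"
  unfolding adj_def by auto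

lemma adj_Inr: "adj G (Inr r) v \<longleftrightarrow> (\<exists>i. v = Inl i \<and> (i, r) \<in> G)"
  unfolding adj_def by auto

lemma is_path_mono: "is_path U p \<Longrightarrow> U \<subseteq> G \<Longrightarrow> is_path G p"
  unfolding is_path_def adj_def by blast

lemma is_path_Cons_Cons:
  "is_path G (x # y # p) \<longleftrightarrow> adj G x y \<and> x \<notin> set (y # p) \<and> is_path G (y # p)"
proof -
  have "(\<forall>k. Suc k < length (x # y # p) \<longrightarrow> adj G ((x # y # p) ! k) ((x # y # p) ! Suc k)) \<longleftrightarrow>
        adj G x y \<and> (\<forall>k. Suc k < length (y # p) \<longrightarrow> adj G ((y # p) ! k) ((y # p) ! Suc k))"
    by (metis (no_types, lifting) Suc_less_eq length_Cons nat.exhaust nth_Cons_0 nth_Cons_Suc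
        zero_less_Suc)
  then show ?thesis unfolding is_path_def by auto
qed

lemma is_path_Cons:
  "p \<noteq> [] \<Longrightarrow> is_path G (x # p) \<longleftrightarrow> adj G x (hd p) \<and> x \<notin> set p \<and> is_path G p"
  by (cases p) (auto simp: is_path_Cons_Cons)

lemma is_path_snoc:
  "p \<noteq> [] \<Longrightarrow> is_path G (p @ [x]) \<longleftrightarrow> is_path G p \<and> x \<notin> set p \<and> adj G (last p) x"
proof (induction p rule: list_nonempty_induct)
  case (single y) then show ?case by (auto simp: is_path_Cons_Cons is_path_def)
next
  case (cons y p) then show ?case by (auto simp: is_path_Cons)
qed

lemma nth_Suc_penultimate: "2 \<le> length p \<Longrightarrow> p ! Suc (length p - 2) = last p"
  by (cases p) (auto simp: last_conv_nth Suc_diff_Suc numeral_2_eq_2)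

lemma cycle_vertex_two_neighbours:
  assumes path: "is_path G p" and len: "3 \<le> length p" and closed: "adj G (last p) (hd p)"
    and q: "q < length p"
  obtains a b where "a \<noteq> b" and "adj G (p ! q) a" and "adj G (p ! q) b"
proof -
  define pred where "pred = (if q = 0 then length p - 1 else q - 1)"
  define succ where "succ = (if q = length p - 1 then 0 else Suc q)"
  have step: "adj G (p ! k) (p ! Suc k)" if "Suc k < length p" for k
    using path that unfolding is_path_def by blast
  have ends: "adj G (p ! (length p - 1)) (p ! 0)"
    using closed len by (metis hd_conv_nth last_conv_nth list.size(3) not_numeral_le_zero)
  have "adj G (p ! q) (p ! pred)"
    using step[of "q - 1"] ends q unfolding pred_def by (auto simp: adj_sym)
  moreover have "adj G (p ! q) (p ! succ)"
    using step[of q] ends q unfolding succ_def by auto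
  moreover have "p ! pred \<noteq> p ! succ"
    using path len q unfolding is_path_def pred_def succ_def by (auto simp: nth_eq_iff_index_eq)
  ultimately show ?thesis using that by blast
qed

section \<open>Attaching pendant vertices to a tree\<close>

locale pendant_extension =
  fixes U G :: bgraph and I K S :: "nat set"
  assumes core_tree: "spanning_tree U (Inl ` I \<union> Inr ` S)"
    and core_left_deg: "\<And>i. i \<in> I \<Longrightarrow> left_deg U i = 2"
    and core_edges: "\<And>i r. i \<in> I \<Longrightarrow> (i, r) \<in> G \<longleftrightarrow> (i, r) \<in> U"
    and edges: "\<And>i r. (i, r) \<in> G \<Longrightarrow> (i \<in> I \<or> i \<in> K) \<and> r \<in> S"
    and pendant: "\<And>i. i \<in> K \<Longrightarrow> \<exists>l\<in>S. \<forall>r. (i, r) \<in> G \<longleftrightarrow> r = l"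
begin

lemma core_edge_vertices: "(i, r) \<in> U \<Longrightarrow> i \<in> I \<and> r \<in> S"
  using core_tree unfolding spanning_tree_def by blast

lemma core_subset: "U \<subseteq> G"
  using core_edges core_edge_vertices by auto

lemma core_connected: "connected_on U (Inl ` I \<union> Inr ` S)"
  using core_tree unfolding spanning_tree_def by blast

lemma adj_core: "adj G x y \<Longrightarrow> x \<notin> Inl ` K \<Longrightarrow> y \<notin> Inl ` K \<Longrightarrow> adj U x y"
  unfolding adj_def using edges core_edges by blast

lemma path_into_core:
  assumes u: "u \<in> Inl ` (I \<union> K) \<union> Inr ` S" and v: "v \<in> Inl ` I \<union> Inr ` S"
  obtains p where "is_path G p" "hd p = u" "last p = v" "set p \<subseteq> Inl ` I \<union> Inr ` S \<union> {u}"
proof (cases "u \<in> Inl ` I \<union> Inr ` S")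
  case True
  then show ?thesis
    using that core_connected v is_path_mono[OF _ core_subset] unfolding connected_on_def by blast
next
  case False
  then obtain i where i: "u = Inl i" "i \<in> K" using u by auto
  then obtain l where l: "l \<in> S" "(i, l) \<in> G" using pendant by blast
  obtain p where p: "is_path U p" "hd p = Inr l" "last p = v" "set p \<subseteq> Inl ` I \<union> Inr ` S"
    using core_connected v l unfolding connected_on_def by blast
  have "p \<noteq> []" using p unfolding is_path_def by simp
  then have "is_path G (u # p)" "last (u # p) = v"
    using is_path_mono[OF p(1) core_subset] p False l(2) i(1) by (auto simp: is_path_Cons adj_def)
  then show ?thesis using that[of "u # p"] p(4) by auto
qed

lemma connected: "connected_on G (Inl ` (I \<union> K) \<union> Inr ` S)"
  unfolding connected_on_def
proof (intro ballI)
  fix u v assume u: "u \<in> Inl ` (I \<union> K) \<union> Inr ` S" and v: "v \<in> Inl ` (I \<union> K) \<union> Inr ` S"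
  show "\<exists>p. is_path G p \<and> hd p = u \<and> last p = v \<and> set p \<subseteq> Inl ` (I \<union> K) \<union> Inr ` S"
  proof (cases "v \<in> Inl ` I \<union> Inr ` S")
    case True
    obtain p where "is_path G p" "hd p = u" "last p = v" "set p \<subseteq> Inl ` I \<union> Inr ` S \<union> {u}"
      using path_into_core[OF u True] .
    moreover have "Inl ` I \<union> Inr ` S \<union> {u} \<subseteq> Inl ` (I \<union> K) \<union> Inr ` S" using u by blast
    ultimately show ?thesis by blast
  next
    case v_pendant: False
    show ?thesis
    proof (cases "u = v")
      case True
      then show ?thesis using u unfolding is_path_def by (intro exI[of _ "[u]"]) auto
    next
      case False
      then obtain i where i: "v = Inl i" "i \<in> K" using v v_pendant by auto
      obtain l where l: "l \<in> S" "(i, l) \<in> G" using pendant i by blast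
      obtain p where p: "is_path G p" "hd p = u" "last p = Inr l"
          "set p \<subseteq> Inl ` I \<union> Inr ` S \<union> {u}"
        using path_into_core[OF u, of "Inr l"] l by blast
      have "p \<noteq> []" using p unfolding is_path_def by simp
      moreover have "v \<notin> set p" using p(4) False v_pendant by blast
      ultimately have "is_path G (p @ [v])" using is_path_snoc p l i by (auto simp: adj_def)
      then show ?thesis using p \<open>p \<noteq> []\<close> u v by (intro exI[of _ "p @ [v]"]) auto
    qed
  qed
qed

lemma acyclic: "acyclic_graph G"
  unfolding acyclic_graph_def
proof
  assume "\<exists>p. is_path G p \<and> 3 \<le> length p \<and> adj G (last p) (hd p)"
  then obtain p where p: "is_path G p" "3 \<le> length p" "adj G (last p) (hd p)" by blast
  show False
  proof (cases "\<exists>x\<in>set p. x \<in> Inl ` K")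
    case True
    then obtain q i where q: "q < length p" "p ! q = Inl i" "i \<in> K"
      by (metis imageE in_set_conv_nth)
    then obtain a b where "a \<noteq> b" "adj G (Inl i) a" "adj G (Inl i) b"
      using cycle_vertex_two_neighbours[OF p] by metis
    then show False using pendant[OF q(3)] by (auto simp: adj_Inl)
  next
    case False
    then have "is_path U p" "adj U (last p) (hd p)"
      using p adj_core unfolding is_path_def by (auto simp: nth_mem)
    then show False
      using p(2) core_tree unfolding spanning_tree_def acyclic_graph_def by blast
  qed
qed

lemma spanning_tree: "spanning_tree G (Inl ` (I \<union> K) \<union> Inr ` S)"
  unfolding spanning_tree_def using connected acyclic edges by blast

lemma left_deg_one_or_two: "i \<in> I \<union> K \<Longrightarrow> left_deg G i \<in> {1, 2}"
proof (cases "i \<in> I")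
  case True
  then show ?thesis using core_left_deg core_edges unfolding left_deg_def by simp
next
  case False
  moreover assume "i \<in> I \<union> K"
  ultimately obtain l where "\<forall>r. (i, r) \<in> G \<longleftrightarrow> r = l" using pendant by blast
  then have "{r. (i, r) \<in> G} = {l}" by blast
  then show ?thesis unfolding left_deg_def by simp
qed

lemma left_vertex_with_two_neighbours:
  assumes "(i, a) \<in> G" and "(i, b) \<in> G" and "a \<noteq> b"
  shows "i \<in> I" and "{r. (i, r) \<in> U} = {a, b}"
proof -
  show i: "i \<in> I" using assms edges pendant by metis
  have "{a, b} \<subseteq> {r. (i, r) \<in> U}" using assms core_edges[OF i] by auto
  moreover have "finite {r. (i, r) \<in> U}" and "card {r. (i, r) \<in> U} = card {a, b}"
    using core_left_deg[OF i] assms(3) unfolding left_deg_def by (auto intro: card_ge_0_finite)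
  ultimately show "{r. (i, r) \<in> U} = {a, b}" using card_subset_eq by metis
qed

lemma path_from_root_follows_matching:
  assumes N: "N \<subseteq> U" "perfect_matching N I (S - {j})"
    and p: "is_path G p" "hd p = Inr j"
  shows "Suc q < length p \<Longrightarrow> p ! q = Inl i \<Longrightarrow> \<exists>r. p ! Suc q = Inr r \<and> (i, r) \<in> N"
proof (induction q arbitrary: i rule: less_induct)
  case (less q)
  have step: "adj G (p ! k) (p ! Suc k)" if "Suc k < length p" for k
    using p(1) that unfolding is_path_def by blast
  have distinct: "p ! k \<noteq> p ! k'" if "k < length p" "k' < length p" "k \<noteq> k'" for k k'
    using p(1) that unfolding is_path_def by (simp add: nth_eq_iff_index_eq)
  have "p ! 0 = Inr j" using p unfolding is_path_def by (simp add: hd_conv_nth)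
  then obtain q' where q': "q = Suc q'" using less.prems by (cases q) auto
  obtain a where a: "p ! q' = Inr a" "(i, a) \<in> G"
    using step[of q'] less.prems q' by (auto simp: adj_sym adj_Inl)
  obtain b where b: "p ! Suc q = Inr b" "(i, b) \<in> G"
    using step[of q] less.prems by (auto simp: adj_Inl)
  have "a \<noteq> b" using distinct[of q' "Suc q"] a b less.prems q' by auto
  note i = left_vertex_with_two_neighbours[OF a(2) b(2) this]
  obtain r where r: "(i, r) \<in> N" using N(2) i(1) unfolding perfect_matching_def by blast
  \<comment> \<open>The edge entering \<open>Inr a\<close> is the matching edge of the previous left vertex
    (or \<open>a = j\<close> is unmatched), so the matching edge of \<open>i\<close> must leave towards \<open>b\<close>.\<close>
  have "r \<noteq> a"
  proof
    assume r_a: "r = a"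
    show False
    proof (cases q')
      case 0
      then show False using r r_a a \<open>p ! 0 = Inr j\<close> N(2) unfolding perfect_matching_def by auto
    next
      case (Suc q'')
      have "adj G (Inr a) (p ! q'')" using step[of q''] a less.prems q' Suc by (simp add: adj_sym)
      then obtain i' where i': "p ! q'' = Inl i'" by (auto simp: adj_Inr)
      then have "(i', a) \<in> N" using less.IH[of q'' i'] a Suc q' less.prems by auto
      moreover have "i' \<noteq> i" using distinct[of q'' q] i' less.prems q' Suc by auto
      ultimately show False using N(2) r r_a unfolding perfect_matching_def by blast
    qed
  qed
  then have "r = b" using r N(1) i(2) by blast
  then show ?case using b r by blast
qed

lemma parent_edges_eq_matching:
  assumes N: "N \<subseteq> U" "perfect_matching N I (S - {j})" and j: "j \<in> S"
  shows "parent_edges G j = N"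
proof
  show "parent_edges G j \<subseteq> N"
  proof
    fix x assume "x \<in> parent_edges G j"
    then obtain i k p where x: "x = (i, k)" and p: "is_path G p" "hd p = Inr j" "last p = Inr k"
      "2 \<le> length p" "p ! (length p - 2) = Inl i"
      unfolding parent_edges_def tree_parent_def by blast
    have "p ! Suc (length p - 2) = Inr k"
      using p(3,4) by (simp add: nth_Suc_penultimate)
    then show "x \<in> N"
      using path_from_root_follows_matching[OF N p(1,2), of "length p - 2" i] p(4,5) x by auto
  qed
next
  show "N \<subseteq> parent_edges G j"
  proof
    fix x assume xN: "x \<in> N"
    then obtain i k where x: "x = (i, k)" by (cases x)
    have k: "k \<in> S" "k \<noteq> j" using N(2) xN x unfolding perfect_matching_def by auto
    obtain p where p: "is_path G p" "hd p = Inr j" "last p = Inr k"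
      using connected j k unfolding connected_on_def by blast
    have len: "2 \<le> length p"
    proof (rule ccontr)
      assume "\<not> 2 \<le> length p"
      then obtain x where "p = [x]" using p(1) unfolding is_path_def
        by (metis One_nat_def Suc_1 length_0_conv length_Suc_conv less_2_cases not_le)
      then show False using p(2,3) k(2) by simp
    qed
    have last: "p ! Suc (length p - 2) = Inr k"
      using p(3) len by (simp add: nth_Suc_penultimate)
    moreover have "adj G (p ! (length p - 2)) (p ! Suc (length p - 2))"
      using p(1) len unfolding is_path_def by simp
    ultimately obtain i' where i': "p ! (length p - 2) = Inl i'" by (auto simp: adj_sym adj_Inr)
    then have "(i', k) \<in> N"
      using path_from_root_follows_matching[OF N p(1,2), of "length p - 2" i'] len last by auto
    then have "i' = i" using N(2) k xN x unfolding perfect_matching_def by blast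
    moreover have "x \<in> G" using xN N(1) core_subset by blast
    ultimately show "x \<in> parent_edges G j"
      using x p len i' unfolding parent_edges_def tree_parent_def by blast
  qed
qed

end

section \<open>Compatible topes\<close>

lemma compatibleD:
  "compatible G H \<Longrightarrow> M1 \<subseteq> G \<Longrightarrow> M2 \<subseteq> H \<Longrightarrow> perfect_matching M1 I J \<Longrightarrow>
    perfect_matching M2 I J \<Longrightarrow> M1 = M2"
  unfolding compatible_def by blast

lemma perfect_matching_image:
  assumes "inj_on a J" and "inj_on b J"
  shows "perfect_matching ((\<lambda>r. (a r, b r)) ` J) (a ` J) (b ` J)"
  using assms unfolding perfect_matching_def inj_on_def by blast

lemma perfect_matching_card: "perfect_matching N I J \<Longrightarrow> card I = card J"
proof -
  assume pm: "perfect_matching N I J"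
  then have "bij_betw fst N I" "bij_betw snd N J"
    unfolding perfect_matching_def bij_betw_def inj_on_def by force+
  then show ?thesis by (metis bij_betw_same_card)
qed

definition tope_map :: "bgraph \<Rightarrow> nat \<Rightarrow> nat" where
  "tope_map G i = (THE r. (i, r) \<in> G)"

lemma tope_map_edge: "is_tope n d G \<Longrightarrow> i \<in> {1..n} \<Longrightarrow> (i, tope_map G i) \<in> G"
  unfolding is_tope_def tope_map_def by (metis theI')

lemma tope_edge_iff: "is_tope n d G \<Longrightarrow> (i, r) \<in> G \<longleftrightarrow> i \<in> {1..n} \<and> r = tope_map G i"
  using tope_map_edge unfolding is_tope_def by blast

lemma finite_tope_column: "is_tope n d G \<Longrightarrow> finite {i. (i, r) \<in> G}"
  unfolding is_tope_def by (rule finite_subset[of _ "{1..n}"]) auto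

lemma tope_column_exchange:
  assumes "is_tope n d H" and "RD H r \<le> RD G r" and "(i, r) \<in> H" and "(i, r) \<notin> G"
  shows "\<exists>i'. (i', r) \<in> G \<and> (i', r) \<notin> H"
proof (rule ccontr)
  assume "\<not> ?thesis"
  then have "{i'. (i', r) \<in> G} \<subset> {i'. (i', r) \<in> H}" using assms(3,4) by blast
  then have "RD G r < RD H r"
    unfolding RD_def using finite_tope_column[OF assms(1)] by (rule psubset_card_mono[rotated])
  with assms(2) show False by simp
qed

lemma finite_self_map_invariant_subset:
  assumes "finite R" and "R \<noteq> {}" and "f ` R \<subseteq> R"
  obtains J where "J \<subseteq> R" and "J \<noteq> {}" and "f ` J = J"
proof -
  define P where "P J \<longleftrightarrow> J \<subseteq> R \<and> J \<noteq> {} \<and> f ` J \<subseteq> J" for J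
  obtain J where PJ: "P J" and minJ: "\<And>J'. P J' \<Longrightarrow> card J \<le> card J'"
    using ex_has_least_nat[of P R card] assms unfolding P_def by blast
  then have "P (f ` J)" unfolding P_def by auto
  with PJ minJ have "f ` J = J"
    unfolding P_def by (meson assms(1) card_seteq finite_subset)
  with PJ that show ?thesis unfolding P_def by blast
qed

lemma compatible_matchings_agree:
  assumes compat: "compatible G H" and a: "inj_on a J" and f: "f ` J = J" and "finite J"
    and G: "\<And>r. r \<in> J \<Longrightarrow> (a r, r) \<in> G" and H: "\<And>r. r \<in> J \<Longrightarrow> (a r, f r) \<in> H"
    and r: "r \<in> J"
  shows "(a r, r) \<in> H"
proof -
  have "inj_on f J" using f \<open>finite J\<close> by (simp add: eq_card_imp_inj_on)
  then have "perfect_matching ((\<lambda>r. (a r, r)) ` J) (a ` J) J"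
    and "perfect_matching ((\<lambda>r. (a r, f r)) ` J) (a ` J) J"
    using perfect_matching_image[OF a inj_on_id] perfect_matching_image[OF a, of f] f by auto
  moreover have "(\<lambda>r. (a r, r)) ` J \<subseteq> G" "(\<lambda>r. (a r, f r)) ` J \<subseteq> H" using G H by auto
  ultimately have "(\<lambda>r. (a r, r)) ` J = (\<lambda>r. (a r, f r)) ` J" by (intro compatibleD[OF compat])
  moreover have "(a r, r) \<in> (\<lambda>r. (a r, r)) ` J" using r by blast
  ultimately have "(a r, r) \<in> (\<lambda>r. (a r, f r)) ` J" by simp
  then show ?thesis using H by auto
qed

lemma compatible_topes_keep_edge:
  assumes tG: "is_tope n d G" and tH: "is_tope n d H" and compat: "compatible G H"
    and RD_le: "\<And>r. r \<noteq> l \<Longrightarrow> RD H r \<le> RD G r"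
    and edge: "(i0, l) \<in> G"
  shows "(i0, l) \<in> H"
proof (rule ccontr)
  assume not_H: "(i0, l) \<notin> H"
  define g where "g = tope_map G"
  define h where "h = tope_map H"
  define D where "D = {i\<in>{1..n}. g i \<noteq> h i}"
  have G_iff: "(i, r) \<in> G \<longleftrightarrow> i \<in> {1..n} \<and> r = g i" for i r
    unfolding g_def using tope_edge_iff[OF tG] .
  have H_iff: "(i, r) \<in> H \<longleftrightarrow> i \<in> {1..n} \<and> r = h i" for i r
    unfolding h_def using tope_edge_iff[OF tH] .
  have i0: "i0 \<in> D" "g i0 = l" using edge not_H G_iff H_iff D_def by auto
  define R where "R = g ` D"
  define arc where "arc = inv_into D g"
  have arc: "arc r \<in> D" "g (arc r) = r" if "r \<in> R" for r
    using that unfolding R_def arc_def by (auto intro: inv_into_into f_inv_into_f)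
  \<comment> \<open>By the column bound, \<open>f\<close> maps \<open>R\<close> into itself (the value \<open>l\<close> is hit by \<open>i0\<close>).\<close>
  define f where "f = h \<circ> arc"
  have "f ` R \<subseteq> R"
  proof
    fix r' assume "r' \<in> f ` R"
    then obtain r where r: "r \<in> R" "r' = h (arc r)" unfolding f_def by auto
    show "r' \<in> R"
    proof (cases "r' = l")
      case True then show ?thesis using i0 R_def by blast
    next
      case False
      have "(arc r, r') \<in> H" "(arc r, r') \<notin> G" using arc[OF r(1)] r D_def G_iff H_iff by auto
      then obtain i' where "(i', r') \<in> G" "(i', r') \<notin> H"
        using tope_column_exchange[OF tH RD_le[OF False]] by blast
      then show ?thesis unfolding R_def D_def using G_iff H_iff by auto
    qed
  qed
  moreover have "finite R" "R \<noteq> {}" using i0 unfolding R_def D_def by auto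
  ultimately obtain J where J: "J \<subseteq> R" "J \<noteq> {}" "f ` J = J"
    using finite_self_map_invariant_subset by metis
  obtain r where r: "r \<in> J" using J(2) by blast
  have inj: "inj_on arc J" using arc J(1) by (metis inj_onI subsetD)
  have in_G: "(arc r, r) \<in> G" and in_H: "(arc r, f r) \<in> H" if "r \<in> J" for r
    using that arc J(1) D_def G_iff H_iff unfolding f_def by auto
  have "(arc r, r) \<in> H"
    using compatible_matchings_agree[OF compat inj J(3) finite_subset[OF J(1) \<open>finite R\<close>]
        in_G in_H r] .
  then show False using arc r J(1) D_def H_iff by auto
qed

section \<open>The topes around a lattice point\<close>

lemma minus_unit_lattice_point:
  assumes w: "lattice_point d (n + 1) w" and j: "j \<in> supp_bar d w"
  shows "lattice_point d n (minus_unit w j)"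
proof -
  have j': "j \<in> {1..d}" "1 \<le> w j" using j unfolding supp_bar_def by auto
  have "(\<Sum>k\<in>{1..d}. w k) = w j + (\<Sum>k\<in>{1..d} - {j}. w k)"
    "(\<Sum>k\<in>{1..d}. minus_unit w j k) = (w j - 1) + (\<Sum>k\<in>{1..d} - {j}. w k)"
    using j' by (simp_all add: sum.remove minus_unit_def)
  then show ?thesis using w j' unfolding lattice_point_def minus_unit_def by auto
qed

locale arrangement_at_point =
  fixes n d :: nat and M :: "nat set \<Rightarrow> nat set \<Rightarrow> bgraph"
    and T :: "(nat \<Rightarrow> nat) \<Rightarrow> bgraph" and w :: "nat \<Rightarrow> nat"
  assumes ensemble: "matching_ensemble n d M"
    and arrangement: "extended_tope_arrangement n d T"
    and compatible_ensemble: "\<forall>v I J. lattice_point d n v \<and> I \<subseteq> {1..n} \<and> J \<subseteq> {1..d} \<and>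
      card I = card J \<longrightarrow> compatible (T v) (M I J)"
    and point: "lattice_point d (n + 1) w"
begin

abbreviation S where "S \<equiv> supp_bar d w"

abbreviation Tw where "Tw j \<equiv> T (minus_unit w j)"

lemma S_subset: "S \<subseteq> {1..d}"
  unfolding supp_bar_def by auto

lemma finite_S: "finite S"
  using S_subset finite_subset by blast

lemma S_nonempty: "S \<noteq> {}"
proof -
  have "(\<Sum>k\<in>{1..d}. w k) \<noteq> 0" using point unfolding lattice_point_def by simp
  then obtain k where "k \<in> {1..d}" "w k \<noteq> 0" by (meson sum.neutral)
  then show ?thesis unfolding supp_bar_def by auto
qed

lemma Tw_tope: "j \<in> S \<Longrightarrow> is_tope n d (Tw j)"
  using arrangement minus_unit_lattice_point[OF point]
  unfolding extended_tope_arrangement_def by blast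

lemma Tw_compatible: "j \<in> S \<Longrightarrow> k \<in> S \<Longrightarrow> compatible (Tw j) (Tw k)"
  using arrangement minus_unit_lattice_point[OF point]
  unfolding extended_tope_arrangement_def by blast

lemma Tw_column_card:
  assumes "j \<in> S" shows "card {i. (i, r) \<in> Tw j} = (if r = j then w r - 1 else w r)"
proof -
  have "RD (Tw j) = minus_unit w j"
    using assms arrangement minus_unit_lattice_point[OF point]
    unfolding extended_tope_arrangement_def by blast
  then show ?thesis unfolding RD_def minus_unit_def by (metis fun_upd_apply)
qed

lemma Tw_edge: "j \<in> S \<Longrightarrow> (i, r) \<in> Tw j \<Longrightarrow> i \<in> {1..n} \<and> r \<in> S"
proof -
  assume j: "j \<in> S" and edge: "(i, r) \<in> Tw j"
  have "i \<in> {1..n}" "r \<in> {1..d}" using Tw_tope[OF j] edge unfolding is_tope_def by auto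
  moreover have "card {i. (i, r) \<in> Tw j} \<noteq> 0"
    using edge finite_tope_column[OF Tw_tope[OF j]] by auto
  then have "1 \<le> w r" using Tw_column_card[OF j, of r] by (auto split: if_splits)
  ultimately show ?thesis unfolding supp_bar_def by blast
qed

lemma own_edge_shared:
  assumes l: "l \<in> S" and k: "k \<in> S" and edge: "(i, l) \<in> Tw l"
  shows "(i, l) \<in> Tw k"
proof (cases "l = k")
  case False
  have "RD (Tw k) r \<le> RD (Tw l) r" if "r \<noteq> l" for r
    using Tw_column_card[OF l, of r] Tw_column_card[OF k, of r] that unfolding RD_def by auto
  then show ?thesis using compatible_topes_keep_edge[OF Tw_tope[OF l] Tw_tope[OF k]
      Tw_compatible[OF l k] _ edge] by blast
qed (use edge in simp)

definition pendant_left :: "nat set" where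
  "pendant_left = {i\<in>{1..n}. \<exists>l\<in>S. (i, l) \<in> Tw l}"

definition core_left :: "nat set" where
  "core_left = {1..n} - pendant_left"

lemma pendant_left_edge:
  assumes "i \<in> pendant_left"
  shows "\<exists>l\<in>S. \<forall>k\<in>S. \<forall>r. (i, r) \<in> Tw k \<longleftrightarrow> r = l"
proof -
  obtain l where l: "l \<in> S" "(i, l) \<in> Tw l" using assms unfolding pendant_left_def by blast
  have "(i, r) \<in> Tw k \<longleftrightarrow> r = l" if k: "k \<in> S" for k r
    using own_edge_shared[OF l(1) k l(2)] tope_edge_iff[OF Tw_tope[OF k]] by metis
  then show ?thesis using l(1) by blast
qed

definition core_part :: "nat \<Rightarrow> bgraph" where
  "core_part j = Tw j \<inter> (core_left \<times> UNIV)"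

lemma core_part_column:
  assumes j: "j \<in> S" and r: "r \<in> S - {j}"
  shows "{i. (i, r) \<in> core_part j} = {i. (i, r) \<in> Tw j} - {i. (i, r) \<in> Tw r}"
proof (intro set_eqI iffI)
  fix i assume "i \<in> {i. (i, r) \<in> core_part j}"
  then show "i \<in> {i. (i, r) \<in> Tw j} - {i. (i, r) \<in> Tw r}"
    using r unfolding core_part_def core_left_def pendant_left_def by auto
next
  fix i assume i: "i \<in> {i. (i, r) \<in> Tw j} - {i. (i, r) \<in> Tw r}"
  have "i \<notin> pendant_left"
  proof
    assume "i \<in> pendant_left"
    then obtain l where "l \<in> S" "\<forall>k\<in>S. \<forall>r. (i, r) \<in> Tw k \<longleftrightarrow> r = l"
      using pendant_left_edge by blast
    then show False using i j r by blast
  qed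
  then show "i \<in> {i. (i, r) \<in> core_part j}"
    using i Tw_edge[OF j] unfolding core_part_def core_left_def by auto
qed

lemma core_part_perfect_matching:
  assumes j: "j \<in> S"
  shows "perfect_matching (core_part j) core_left (S - {j})"
  unfolding perfect_matching_def
proof (intro conjI ballI)
  show "core_part j \<subseteq> core_left \<times> (S - {j})"
    using Tw_edge[OF j] j unfolding core_part_def core_left_def pendant_left_def by fastforce
next
  fix i assume "i \<in> core_left"
  then show "\<exists>!r. (i, r) \<in> core_part j"
    using tope_edge_iff[OF Tw_tope[OF j]] unfolding core_part_def core_left_def by auto
next
  fix r assume r: "r \<in> S - {j}"
  define A where "A = {i. (i, r) \<in> Tw j}"
  define B where "B = {i. (i, r) \<in> Tw r}"
  have "B \<subseteq> A" using own_edge_shared[of r j] r j unfolding A_def B_def by auto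
  moreover have "finite A" using finite_tope_column[OF Tw_tope[OF j]] unfolding A_def .
  moreover have "card A = w r" "card B = w r - 1" "1 \<le> w r"
    using Tw_column_card[OF j, of r] Tw_column_card[of r r] r
    unfolding A_def B_def supp_bar_def by auto
  ultimately have "card (A - B) = 1" by (simp add: card_Diff_subset finite_subset)
  then obtain x where "A - B = {x}" by (rule card_1_singletonE)
  then have "(i, r) \<in> core_part j \<longleftrightarrow> i = x" for i
    using core_part_column[OF j r] unfolding A_def B_def by (metis mem_Collect_eq singleton_iff)
  then show "\<exists>!i. (i, r) \<in> core_part j" by (intro ex1I[of _ x]) auto
qed

lemma card_core_left: "card core_left + 1 = card S"
proof -
  obtain j where j: "j \<in> S" using S_nonempty by blast
  have "card core_left = card (S - {j})"
    using perfect_matching_card[OF core_part_perfect_matching[OF j]] .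
  also have "\<dots> = card S - 1" using j by (simp add: card_Diff_singleton)
  moreover have "card S \<noteq> 0" using S_nonempty finite_S by simp
  ultimately show ?thesis by linarith
qed

lemma core_left_subset: "core_left \<subseteq> {1..n}"
  unfolding core_left_def by blast

lemma ensemble_perfect_matching:
  assumes "I \<subseteq> {1..n}" and "J \<subseteq> {1..d}" and "card I = card J"
  shows "perfect_matching (M I J) I J"
  using ensemble[unfolded matching_ensemble_def, THEN conjunct1, rule_format,
      OF conjI[OF assms(1) conjI[OF assms(2,3)]]] .

lemma ensemble_right_linkage:
  assumes "I \<subseteq> {1..n}" and "J \<subseteq> {1..d}" and "card I + 1 = card J"
  shows "spanning_tree (\<Union>{M I J' | J'. J' \<subseteq> J \<and> card J' = card I}) (Inl ` I \<union> Inr ` J)"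
    and "i \<in> I \<Longrightarrow> left_deg (\<Union>{M I J' | J'. J' \<subseteq> J \<and> card J' = card I}) i = 2"
  using ensemble[unfolded matching_ensemble_def Let_def, THEN conjunct2, THEN conjunct2,
      THEN conjunct2, rule_format, OF conjI[OF assms(1) conjI[OF assms(2,3)]]] by simp_all

lemma core_part_eq_ensemble:
  assumes j: "j \<in> S" shows "core_part j = M core_left (S - {j})"
proof (rule compatibleD)
  have J: "S - {j} \<subseteq> {1..d}" "card core_left = card (S - {j})"
    using S_subset perfect_matching_card[OF core_part_perfect_matching[OF j]] by auto
  show "perfect_matching (M core_left (S - {j})) core_left (S - {j})"
    using ensemble_perfect_matching[OF core_left_subset J] .
  show "compatible (Tw j) (M core_left (S - {j}))"
    using compatible_ensemble[rule_format, OF conjI[OF minus_unit_lattice_point[OF point j]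
          conjI[OF core_left_subset conjI[OF J]]]] .
  show "perfect_matching (core_part j) core_left (S - {j})"
    using core_part_perfect_matching[OF j] .
  show "core_part j \<subseteq> Tw j" unfolding core_part_def by blast
qed simp

lemma core_linkage_union:
  "\<Union>{M core_left J' | J'. J' \<subseteq> S \<and> card J' = card core_left} = (\<Union>j\<in>S. core_part j)"
proof -
  have choices: "{J'. J' \<subseteq> S \<and> card J' = card core_left} = (\<lambda>j. S - {j}) ` S"
  proof (intro set_eqI iffI)
    fix J' assume "J' \<in> {J'. J' \<subseteq> S \<and> card J' = card core_left}"
    then have J': "J' \<subseteq> S" "card J' = card core_left" by auto
    then have "J' \<noteq> S" using card_core_left by auto
    then obtain j where j: "j \<in> S" "j \<notin> J'" using J'(1) by blast
    have "J' = S - {j}"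
    proof (rule card_seteq)
      show "finite (S - {j})" using finite_S by blast
      show "J' \<subseteq> S - {j}" using J'(1) j(2) by blast
      show "card (S - {j}) \<le> card J'" using J'(2) card_core_left j(1) by (simp add: card_Diff_singleton)
    qed
    then show "J' \<in> (\<lambda>j. S - {j}) ` S" using j by blast
  next
    fix J' assume "J' \<in> (\<lambda>j. S - {j}) ` S"
    then show "J' \<in> {J'. J' \<subseteq> S \<and> card J' = card core_left}"
      using card_core_left by (auto simp: card_Diff_singleton)
  qed
  have "{M core_left J' | J'. J' \<subseteq> S \<and> card J' = card core_left} =
      M core_left ` {J'. J' \<subseteq> S \<and> card J' = card core_left}"
    by blast
  then show ?thesis unfolding choices image_image using core_part_eq_ensemble by simp
qed

lemma core_tree:
  "spanning_tree (\<Union>j\<in>S. core_part j) (Inl ` core_left \<union> Inr ` S)"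
  "i \<in> core_left \<Longrightarrow> left_deg (\<Union>j\<in>S. core_part j) i = 2"
  using ensemble_right_linkage[OF core_left_subset S_subset card_core_left]
  unfolding core_linkage_union by blast+

sublocale tree: pendant_extension "\<Union>j\<in>S. core_part j" "\<Union>j\<in>S. Tw j" core_left pendant_left S
proof
  show "spanning_tree (\<Union>j\<in>S. core_part j) (Inl ` core_left \<union> Inr ` S)"
    by (rule core_tree(1))
  show "left_deg (\<Union>j\<in>S. core_part j) i = 2" if "i \<in> core_left" for i
    using that by (rule core_tree(2))
  show "(i, r) \<in> (\<Union>j\<in>S. Tw j) \<longleftrightarrow> (i, r) \<in> (\<Union>j\<in>S. core_part j)" if "i \<in> core_left" for i r
    using that unfolding core_part_def by blast
  show "(i \<in> core_left \<or> i \<in> pendant_left) \<and> r \<in> S" if "(i, r) \<in> (\<Union>j\<in>S. Tw j)" for i r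
    using that Tw_edge unfolding core_left_def by blast
  show "\<exists>l\<in>S. \<forall>r. (i, r) \<in> (\<Union>j\<in>S. Tw j) \<longleftrightarrow> r = l" if i: "i \<in> pendant_left" for i
  proof -
    obtain l where "l \<in> S" "\<forall>k\<in>S. \<forall>r. (i, r) \<in> Tw k \<longleftrightarrow> r = l"
      using pendant_left_edge[OF i] by blast
    then show ?thesis using S_nonempty by blast
  qed
qed

lemma common_edges:
  assumes j: "j \<in> S" shows "(\<Inter>k\<in>S. Tw k) = Tw j \<inter> (pendant_left \<times> UNIV)"
proof (intro set_eqI iffI)
  fix x assume x: "x \<in> (\<Inter>k\<in>S. Tw k)"
  obtain i r where ir: "x = (i, r)" by fastforce
  then have "i \<in> {1..n}" "r \<in> S" using x j Tw_edge by blast+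
  moreover have "(i, r) \<in> Tw r" using x ir \<open>r \<in> S\<close> by blast
  ultimately have "i \<in> pendant_left" unfolding pendant_left_def by blast
  then show "x \<in> Tw j \<inter> (pendant_left \<times> UNIV)" using x ir j by blast
next
  fix x assume "x \<in> Tw j \<inter> (pendant_left \<times> UNIV)"
  then show "x \<in> (\<Inter>k\<in>S. Tw k)" using pendant_left_edge j by fastforce
qed

lemma Tw_decomposition:
  assumes j: "j \<in> S"
  shows "Tw j = (\<Inter>k\<in>S. Tw k) \<union> parent_edges (\<Union>k\<in>S. Tw k) j"
    and "(\<Inter>k\<in>S. Tw k) \<inter> parent_edges (\<Union>k\<in>S. Tw k) j = {}"
proof -
  have parents: "parent_edges (\<Union>k\<in>S. Tw k) j = core_part j"
    using tree.parent_edges_eq_matching[OF _ core_part_perfect_matching[OF j] j] j by blast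
  have "Tw j = Tw j \<inter> (pendant_left \<times> UNIV) \<union> core_part j"
    using Tw_edge[OF j] unfolding core_part_def core_left_def by auto
  then show "Tw j = (\<Inter>k\<in>S. Tw k) \<union> parent_edges (\<Union>k\<in>S. Tw k) j"
    unfolding parents common_edges[OF j] .
  have "Tw j \<inter> (pendant_left \<times> UNIV) \<inter> core_part j = {}"
    unfolding core_part_def core_left_def by blast
  then show "(\<Inter>k\<in>S. Tw k) \<inter> parent_edges (\<Union>k\<in>S. Tw k) j = {}"
    unfolding parents common_edges[OF j] .
qed

end

theorem mainTheorem9:
  fixes n d :: nat
    and M :: "nat set \<Rightarrow> nat set \<Rightarrow> (nat \<times> nat) set"
    and T :: "(nat \<Rightarrow> nat) \<Rightarrow> (nat \<times> nat) set"
    and w :: "nat \<Rightarrow> nat"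
  assumes "0 < n" and "0 < d"
    and "matching_ensemble n d M"
    and "extended_tope_arrangement n d T"
    and "\<forall>v I J. lattice_point d n v \<and> I \<subseteq> {1..n} \<and> J \<subseteq> {1..d} \<and> card I = card J
           \<longrightarrow> compatible (T v) (M I J)"
    and "lattice_point d (n + 1) w"
  shows "let S = supp_bar d w;
             Tb = (\<Union>j\<in>S. T (minus_unit w j));
             \<Omega> = (\<Inter>j\<in>S. T (minus_unit w j))
         in spanning_tree Tb (Inl ` {1..n} \<union> Inr ` S) \<and>
            (\<forall>i\<in>{1..n}. left_deg Tb i \<in> {1, 2}) \<and>
            (\<forall>j\<in>S. T (minus_unit w j) = \<Omega> \<union> parent_edges Tb j \<and>
                    \<Omega> \<inter> parent_edges Tb j = {})"
proof -
  interpret arrangement_at_point n d M T w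
    using assms(3-6) by unfold_locales
  have left: "core_left \<union> pendant_left = {1..n}"
    unfolding core_left_def pendant_left_def by blast
  have "spanning_tree (\<Union>j\<in>S. Tw j) (Inl ` {1..n} \<union> Inr ` S)"
    using tree.spanning_tree unfolding left .
  moreover have "\<forall>i\<in>{1..n}. left_deg (\<Union>j\<in>S. Tw j) i \<in> {1, 2}"
    using tree.left_deg_one_or_two unfolding left by blast
  moreover have "\<forall>j\<in>S. Tw j = (\<Inter>k\<in>S. Tw k) \<union> parent_edges (\<Union>k\<in>S. Tw k) j \<and>
      (\<Inter>k\<in>S. Tw k) \<inter> parent_edges (\<Union>k\<in>S. Tw k) j = {}"
    using Tw_decomposition by (intro ballI conjI)
  ultimately show ?thesis
    unfolding Let_def by (intro conjI)
qed

end
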